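(* Let $R$ be any commutative ring with $1$, $n$ a positive integer, $r,s$ nonnegative integers, $V=R^n$, $G=GL_n(R)$. Let $\sigma_{r+s}:R\mathfrak{S}_{r+s}\to\mathrm{End}_G(V^{\otimes r+s})$ and $\sigma_{r,s}:\mathfrak{B}_{r,s}^n\to\mathrm{End}_G(V^{\otimes r}\otimes {V^*}^{\otimes s})$ be the representation maps described in the context. Then: (1) $\sigma_{r,s}$ is surjective if and only if $\sigma_{r+s}$ is surjective; (2) the action of $\mathfrak{B}_{r,s}^n$ on $V^{\otimes r}\otimes {V^*}^{\otimes s}$ is faithful if and only if $n\ge r+s$; (3) the annihilator of $\mathfrak{B}_{r,s}^n$ on $V^{\otimes r}\otimes {V^*}^{\otimes s}$ is free over $R$ if and only if the annihilator of $R\mathfrak{S}_{r+s}$ on $V^{\otimes r+s}$ is free over $R$, and if so they have the same rank.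
   Context: $G=GL_n(R)$ acts naturally on $V=R^n$ (basis $v_1,\dots,v_n$), on $V^*$ by $(gf)(v)=f(g^{-1}v)$, and diagonally on tensor products. A Brauer $m$-diagram is a graph with $m$ vertices in a top row, $m$ in a bottom row and $m$ edges, each vertex lying on exactly one edge. The Brauer algebra $\mathfrak{B}_m^n$ is the free $R$-module on Brauer $m$-diagrams with product $d_1d_2=n^kd_3$, where $d_3$ is obtained by stacking $d_1$ above $d_2$, identifying the bottom row of $d_1$ with the top row of $d_2$, and removing the middle vertices and the $k$ closed cycles. An edge is propagating if its endpoints lie in different rows; totally propagating diagrams span a copy of $R\mathfrak{S}_m$. With $m=r+s$, let $F$ be the first $r$ vertices of each row and $L$ the last $s$. The walled Brauer algebra $\mathfrak{B}_{r,s}^n$ is the $R$-span of diagrams in which every propagating edge has both endpoints in $F$ or both in $L$, and every non-propagating edge has one endpoint in $F$ and one in $L$. A Brauer diagram $d$ acts from the right on $V_1\otimes\cdots\otimes V_m$ (each $V_k\in\{V,V^*\}$, with $V^*$ identified with $V$ via $v_i\mapsto v_i^*$, basis $x_{i_1}\otimes\cdots\otimes x_{i_m}$ indexed by $\mathbf i\in\{1,\dots,n\}^m$) via the matrix $(a_{\mathbf i,\mathbf j})$: write the entries of $\mathbf i$ along the top row and of $\mathbf j$ along the bottom row; $a_{\mathbf i,\mathbf j}=1$ if both ends of every edge carry the same index, and $0$ otherwise. This gives $\sigma_{r+s}$ (action of $R\mathfrak{S}_{r+s}$ on $V^{\otimes r+s}$) and $\sigma_{r,s}$ (action of $\mathfrak{B}_{r,s}^n$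 on $V^{\otimes r}\otimes {V^*}^{\otimes s}$), both with image commuting with $G$. *)

theory Defs
  imports "HOL-Library.FuncSet"
begin

text \<open>Multi-indices \<open>\<^bold>i \<in> {1..n}^m\<close>, encoded 0-based: functions on {0..<m} with values in {0..<n}.
  They index the standard basis \<open>x_\<^bold>i\<close> of \<open>V_1 \<otimes> ... \<otimes> V_m\<close>, \<open>V = R^n\<close>.\<close>
definition idx :: "nat \<Rightarrow> nat \<Rightarrow> (nat \<Rightarrow> nat) set" where
  "idx n m = {0..<m} \<rightarrow>\<^sub>E {0..<n}"

text \<open>Vertices are 0..<2m: vertex k (k<m) is the k-th vertex of the top row,
  vertex m+k is the k-th vertex of the bottom row. A diagram is the perfect matching given by a
  fixed-point-free involution d of {0..<2m} (edges {x, d x}).\<close>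
definition brauer_diagrams :: "nat \<Rightarrow> (nat \<Rightarrow> nat) set" where
  "brauer_diagrams m = {d \<in> {0..<2*m} \<rightarrow>\<^sub>E {0..<2*m}. \<forall>x<2*m. d (d x) = x \<and> d x \<noteq> x}"

definition top_row :: "nat \<Rightarrow> nat \<Rightarrow> bool" where
  "top_row m x \<longleftrightarrow> x < m"

definition col :: "nat \<Rightarrow> nat \<Rightarrow> nat" where
  "col m x = (if x < m then x else x - m)"

definition propagating :: "nat \<Rightarrow> (nat \<Rightarrow> nat) \<Rightarrow> nat \<Rightarrow> bool" where
  "propagating m d x \<longleftrightarrow> top_row m x \<noteq> top_row m (d x)"

definition in_F :: "nat \<Rightarrow> nat \<Rightarrow> nat \<Rightarrow> bool" where
  "in_F r m x \<longleftrightarrow> col m x < r"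

definition walled_diagrams :: "nat \<Rightarrow> nat \<Rightarrow> (nat \<Rightarrow> nat) set" where
  "walled_diagrams r s = {d \<in> brauer_diagrams (r+s). \<forall>x<2*(r+s).
      (propagating (r+s) d x \<longrightarrow> in_F r (r+s) x = in_F r (r+s) (d x)) \<and>
      (\<not> propagating (r+s) d x \<longrightarrow> in_F r (r+s) x \<noteq> in_F r (r+s) (d x))}"

text \<open>Totally propagating diagrams (spanning the copy of the group algebra of S_m).\<close>
definition perm_diagrams :: "nat \<Rightarrow> (nat \<Rightarrow> nat) set" where
  "perm_diagrams m = {d \<in> brauer_diagrams m. \<forall>x<2*m. propagating m d x}"

text \<open>Elements of the free R-module on a set D of diagrams: coefficient functions vanishing off D.\<close>
definition alg_elems :: "(nat \<Rightarrow> nat) set \<Rightarrow> ((nat \<Rightarrow> nat) \<Rightarrow> 'a::comm_ring_1) set" where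
  "alg_elems D = {b. \<forall>d. d \<notin> D \<longrightarrow> b d = 0}"

definition lab :: "nat \<Rightarrow> (nat \<Rightarrow> nat) \<Rightarrow> (nat \<Rightarrow> nat) \<Rightarrow> nat \<Rightarrow> nat" where
  "lab m i j x = (if x < m then i x else j (x - m))"

definition diag_coeff :: "nat \<Rightarrow> (nat \<Rightarrow> nat) \<Rightarrow> (nat \<Rightarrow> nat) \<Rightarrow> (nat \<Rightarrow> nat) \<Rightarrow> 'a::comm_ring_1" where
  "diag_coeff m d i j = (if \<forall>x<2*m. lab m i j x = lab m i j (d x) then 1 else 0)"

text \<open>The representation map on the span of D: b \<mapsto> the right-action matrix
  A i j (meaning x_i . b = \<Sum>_j A i j x_j), zero outside the index set.\<close>
definition rep_map :: "nat \<Rightarrow> nat \<Rightarrow> (nat \<Rightarrow> nat) set \<Rightarrow> ((nat \<Rightarrow> nat) \<Rightarrow> 'a::comm_ring_1)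
    \<Rightarrow> (nat \<Rightarrow> nat) \<Rightarrow> (nat \<Rightarrow> nat) \<Rightarrow> 'a" where
  "rep_map n m D b i j =
     (if i \<in> idx n m \<and> j \<in> idx n m then \<Sum>d\<in>D. b d * diag_coeff m d i j else 0)"

definition sigma_walled :: "nat \<Rightarrow> nat \<Rightarrow> nat \<Rightarrow> ((nat \<Rightarrow> nat) \<Rightarrow> 'a::comm_ring_1)
    \<Rightarrow> (nat \<Rightarrow> nat) \<Rightarrow> (nat \<Rightarrow> nat) \<Rightarrow> 'a" where
  "sigma_walled n r s b = rep_map n (r+s) (walled_diagrams r s) b"

definition sigma_sym :: "nat \<Rightarrow> nat \<Rightarrow> ((nat \<Rightarrow> nat) \<Rightarrow> 'a::comm_ring_1)
    \<Rightarrow> (nat \<Rightarrow> nat) \<Rightarrow> (nat \<Rightarrow> nat) \<Rightarrow> 'a" where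
  "sigma_sym n m b = rep_map n m (perm_diagrams m) b"

text \<open>GL_n(R): pairs (g, g^{-1}) of mutually inverse n x n matrices (entries indexed from 0).\<close>
definition GL :: "nat \<Rightarrow> ((nat \<Rightarrow> nat \<Rightarrow> 'a::comm_ring_1) \<times> (nat \<Rightarrow> nat \<Rightarrow> 'a)) set" where
  "GL n = {(g, h). \<forall>i<n. \<forall>j<n.
      (\<Sum>k<n. g i k * h k j) = (if i = j then 1 else 0) \<and>
      (\<Sum>k<n. h i k * g k j) = (if i = j then 1 else 0)}"

text \<open>Action of g on V_1 \<otimes> ... \<otimes> V_m, where tensor factor k is V if eps k, and V* otherwise:
  tensor_rho m eps g h l j = coefficient of x_l in g x_j.
  On V: g v_j = \<Sum>_i g_{ij} v_i; on V*: g v_j* = \<Sum>_l (g^{-1})_{jl} v_l*.\<close>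
definition tensor_rho :: "nat \<Rightarrow> (nat \<Rightarrow> bool) \<Rightarrow> (nat \<Rightarrow> nat \<Rightarrow> 'a::comm_ring_1) \<Rightarrow>
    (nat \<Rightarrow> nat \<Rightarrow> 'a) \<Rightarrow> (nat \<Rightarrow> nat) \<Rightarrow> (nat \<Rightarrow> nat) \<Rightarrow> 'a" where
  "tensor_rho m eps g h l j = (\<Prod>k<m. if eps k then g (l k) (j k) else h (j k) (l k))"

text \<open>End_G(V_1 \<otimes> ... \<otimes> V_m), as right-action matrices A (x_i \<mapsto> \<Sum>_j A i j x_j)
  supported on the index set and commuting with the action of every g in GL_n(R).\<close>
definition End_G :: "nat \<Rightarrow> nat \<Rightarrow> (nat \<Rightarrow> bool) \<Rightarrow>
    ((nat \<Rightarrow> nat) \<Rightarrow> (nat \<Rightarrow> nat) \<Rightarrow> 'a::comm_ring_1) set" where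
  "End_G n m eps = {A. (\<forall>i j. \<not> (i \<in> idx n m \<and> j \<in> idx n m) \<longrightarrow> A i j = 0) \<and>
     (\<forall>(g, h) \<in> GL n. \<forall>j \<in> idx n m. \<forall>l \<in> idx n m.
        (\<Sum>i\<in>idx n m. tensor_rho m eps g h i j * A i l) =
        (\<Sum>k\<in>idx n m. A j k * tensor_rho m eps g h l k))}"

definition annihilator :: "(nat \<Rightarrow> nat) set \<Rightarrow> (((nat \<Rightarrow> nat) \<Rightarrow> 'a::comm_ring_1)
    \<Rightarrow> (nat \<Rightarrow> nat) \<Rightarrow> (nat \<Rightarrow> nat) \<Rightarrow> 'a) \<Rightarrow> ((nat \<Rightarrow> nat) \<Rightarrow> 'a) set" where
  "annihilator D sigma = {b \<in> alg_elems D. sigma b = (\<lambda>_ _. 0)}"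

definition free_of_rank :: "('b \<Rightarrow> 'a::comm_ring_1) set \<Rightarrow> nat \<Rightarrow> bool" where
  "free_of_rank K k \<longleftrightarrow> (\<exists>f. (\<forall>t<k. f t \<in> K) \<and>
      (\<forall>c. (\<lambda>x. \<Sum>t<k. c t * f t x) = (\<lambda>_. 0) \<longrightarrow> (\<forall>t<k. c t = 0)) \<and>
      (\<forall>v\<in>K. \<exists>c. v = (\<lambda>x. \<Sum>t<k. c t * f t x)))"

definition free_module :: "('b \<Rightarrow> 'a::comm_ring_1) set \<Rightarrow> bool" where
  "free_module K \<longleftrightarrow> (\<exists>k. free_of_rank K k)"

end

theory Submission
  imports Defs "HOL-Combinatorics.Permutations"
begin

text \<open>
  Transposing an endomorphism of \<open>V\<^sup>\<otimes>\<^sup>r\<^sup>+\<^sup>s\<close> in the last \<open>s\<close> tensor positions turns a map commuting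
  with \<open>g \<otimes> \<dots> \<otimes> g\<close> into one commuting with \<open>g\<^sup>\<otimes>\<^sup>r \<otimes> (g\<^sup>-\<^sup>1)\<^sup>T\<^sup>\<otimes>\<^sup>s\<close>, i.e. it identifies
  \<open>End\<^sub>G(V\<^sup>\<otimes>\<^sup>r\<^sup>+\<^sup>s)\<close> with \<open>End\<^sub>G(V\<^sup>\<otimes>\<^sup>r \<otimes> V*\<^sup>\<otimes>\<^sup>s)\<close>. On diagrams the same operation exchanges the top
  and bottom vertex of each of the last \<open>s\<close> columns; this is a bijection from walled Brauer
  diagrams onto permutation diagrams, and it is compatible with the matrix coefficients.
  Hence \<open>\<sigma>\<^sub>r\<^sub>,\<^sub>s\<close> and \<open>\<sigma>\<^sub>r\<^sub>+\<^sub>s\<close> are conjugate by two \<open>R\<close>-linear involutions, which transfers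
  surjectivity, faithfulness and the annihilator. Finally \<open>\<sigma>\<^sub>m\<close> is faithful iff \<open>n \<ge> m\<close>:
  for \<open>n \<ge> m\<close> the basis vector with distinct indices separates the permutations, and for
  \<open>n < m\<close> the antisymmetriser on \<open>n + 1\<close> points acts as zero.
\<close>

section \<open>Partial transposition\<close>

definition idx_splice :: "(nat \<Rightarrow> bool) \<Rightarrow> (nat \<Rightarrow> nat) \<Rightarrow> (nat \<Rightarrow> nat) \<Rightarrow> nat \<Rightarrow> nat" where
  "idx_splice L u v = (\<lambda>k. if L k then v k else u k)"

definition partial_transpose ::
    "(nat \<Rightarrow> bool) \<Rightarrow> ((nat \<Rightarrow> nat) \<Rightarrow> (nat \<Rightarrow> nat) \<Rightarrow> 'a) \<Rightarrow> (nat \<Rightarrow> nat) \<Rightarrow> (nat \<Rightarrow> nat) \<Rightarrow> 'a" where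
  "partial_transpose L A = (\<lambda>i j. A (idx_splice L i j) (idx_splice L j i))"

lemma idx_splice_idx_splice [simp]: "idx_splice L (idx_splice L u v) (idx_splice L v u) = u"
  by (auto simp: idx_splice_def)

lemma partial_transpose_partial_transpose [simp]: "partial_transpose L (partial_transpose L A) = A"
  by (simp add: partial_transpose_def)

lemma partial_transpose_eq_0_iff: "partial_transpose L A = (\<lambda>_ _. 0) \<longleftrightarrow> A = (\<lambda>_ _. 0)"
  by (metis partial_transpose_partial_transpose partial_transpose_def)

lemma idx_splice_in_idx: "u \<in> idx n m \<Longrightarrow> v \<in> idx n m \<Longrightarrow> idx_splice L u v \<in> idx n m"
  by (auto simp: idx_splice_def idx_def PiE_iff extensional_def)

lemma idx_splice_in_idx_iff:
  "idx_splice L u v \<in> idx n m \<and> idx_splice L v u \<in> idx n m \<longleftrightarrow> u \<in> idx n m \<and> v \<in> idx n m"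
  by (metis idx_splice_idx_splice idx_splice_in_idx)

lemma finite_idx [simp]: "finite (idx n m)"
  by (simp add: idx_def finite_PiE)

lemma sum_idx_splice_reindex:
  "(\<Sum>i\<in>idx n m. \<Sum>k\<in>idx n m. F i k) =
   (\<Sum>i\<in>idx n m. \<Sum>k\<in>idx n m. F (idx_splice L i k) (idx_splice L k i))"
proof -
  let ?I = "idx n m" and ?f = "\<lambda>(a, b). (idx_splice L a b, idx_splice L b a)"
  have "(\<Sum>(i, k)\<in>?I \<times> ?I. F i k) = (\<Sum>(i, k)\<in>?I \<times> ?I. F (idx_splice L i k) (idx_splice L k i))"
    by (rule sum.reindex_bij_witness[where i = ?f and j = ?f]) (auto simp: idx_splice_in_idx)
  then show ?thesis by (simp add: sum.cartesian_product)
qed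

lemma tensor_rho_idx_splice:
  "tensor_rho m eps g h (idx_splice L i k) (idx_splice L j l) *
     tensor_rho m eps h g (idx_splice L l j) (idx_splice L k i)
   = tensor_rho m (\<lambda>t. eps t \<noteq> L t) g h i j * tensor_rho m (\<lambda>t. eps t \<noteq> L t) h g l k"
  unfolding tensor_rho_def prod.distrib[symmetric]
  by (intro prod.cong refl) (auto simp: idx_splice_def mult.commute)

section \<open>The commutant as a set of fixed points of conjugation\<close>

lemma GL_swap: "(g, h) \<in> GL n \<Longrightarrow> (h, g) \<in> GL n"
  by (auto simp: GL_def)

lemma prod_idx_delta:
  assumes "x \<in> idx n m" "y \<in> idx n m"
  shows "(\<Prod>t<m. if x t = y t then 1 else 0 :: 'a::comm_ring_1) = (if x = y then 1 else 0)"
proof (cases "x = y")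
  case False
  then obtain t where "x t \<noteq> y t" by auto
  moreover from this assms have "t < m"
    by (auto simp: idx_def PiE_iff extensional_def) metis
  ultimately show ?thesis using False by (intro trans[OF prod_zero]) auto
qed simp

lemma tensor_rho_inverse:
  assumes gh: "(g, h) \<in> GL n" and x: "x \<in> idx n m" and y: "y \<in> idx n m"
  shows "(\<Sum>z\<in>idx n m. tensor_rho m eps g h z x * tensor_rho m eps h g y z)
         = (if x = y then 1 else (0::'a::comm_ring_1))"
proof -
  define f where "f t a = (if eps t then g a (x t) else h (x t) a) * (if eps t then h (y t) a else g a (y t))"
    for t a
  have hg: "(\<Sum>k<n. h i k * g k j) = (if i = j then 1 else 0)" if "i < n" "j < n" for i j
    using gh that by (auto simp: GL_def)
  have factor: "(\<Sum>a\<in>{0..<n}. f t a) = (if x t = y t then 1 else 0)" if "t < m" for t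
  proof -
    have xt: "x t < n" and yt: "y t < n" using x y that by (auto simp: idx_def PiE_iff)
    show ?thesis
    proof (cases "eps t")
      case True
      then have "(\<Sum>a\<in>{0..<n}. f t a) = (\<Sum>k<n. h (y t) k * g k (x t))"
        by (intro sum.cong) (auto simp: f_def atLeast0LessThan mult.commute)
      then show ?thesis using hg[OF yt xt] by auto
    next
      case False
      then have "(\<Sum>a\<in>{0..<n}. f t a) = (\<Sum>k<n. h (x t) k * g k (y t))"
        by (intro sum.cong) (auto simp: f_def atLeast0LessThan)
      then show ?thesis using hg[OF xt yt] by auto
    qed
  qed
  have "(\<Sum>z\<in>idx n m. tensor_rho m eps g h z x * tensor_rho m eps h g y z)
      = (\<Sum>z\<in>idx n m. \<Prod>t\<in>{0..<m}. f t (z t))"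
    by (intro sum.cong refl) (simp add: tensor_rho_def f_def prod.distrib[symmetric] atLeast0LessThan)
  also have "\<dots> = (\<Prod>t\<in>{0..<m}. \<Sum>a\<in>{0..<n}. f t a)"
    unfolding idx_def by (rule prod_sum_PiE[symmetric]) auto
  also have "\<dots> = (\<Prod>t<m. if x t = y t then 1 else 0)"
    by (intro prod.cong) (auto simp: factor)
  also have "\<dots> = (if x = y then 1 else 0)" by (rule prod_idx_delta[OF x y])
  finally show ?thesis .
qed

lemma commute_imp_conj:
  fixes A :: "(nat \<Rightarrow> nat) \<Rightarrow> (nat \<Rightarrow> nat) \<Rightarrow> 'a::comm_ring_1"
  assumes gh: "(g, h) \<in> GL n"
    and comm: "\<And>j l. j \<in> idx n m \<Longrightarrow> l \<in> idx n m \<Longrightarrow>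
       (\<Sum>i\<in>idx n m. tensor_rho m eps g h i j * A i l) = (\<Sum>k\<in>idx n m. A j k * tensor_rho m eps g h l k)"
    and j: "j \<in> idx n m" and l: "l \<in> idx n m"
  shows "A j l = (\<Sum>i\<in>idx n m. \<Sum>k\<in>idx n m. tensor_rho m eps g h i j * A i k * tensor_rho m eps h g l k)"
proof -
  let ?I = "idx n m" and ?\<rho> = "tensor_rho m eps g h" and ?\<rho>' = "tensor_rho m eps h g"
  have "(\<Sum>i\<in>?I. \<Sum>k\<in>?I. ?\<rho> i j * A i k * ?\<rho>' l k) = (\<Sum>k\<in>?I. (\<Sum>i\<in>?I. ?\<rho> i j * A i k) * ?\<rho>' l k)"
    by (subst sum.swap) (simp add: sum_distrib_right)
  also have "\<dots> = (\<Sum>k\<in>?I. (\<Sum>p\<in>?I. A j p * ?\<rho> k p) * ?\<rho>' l k)"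
    using comm j by (intro sum.cong refl) auto
  also have "\<dots> = (\<Sum>p\<in>?I. A j p * (\<Sum>k\<in>?I. ?\<rho> k p * ?\<rho>' l k))"
    unfolding sum_distrib_right sum_distrib_left mult.assoc by (rule sum.swap)
  also have "\<dots> = (\<Sum>p\<in>?I. A j p * (if p = l then 1 else 0))"
    using tensor_rho_inverse[OF gh _ l] by (intro sum.cong refl) auto
  also have "\<dots> = A j l" using l by (simp add: if_distrib cong: if_cong)
  finally show ?thesis by simp
qed

lemma conj_imp_commute:
  fixes A :: "(nat \<Rightarrow> nat) \<Rightarrow> (nat \<Rightarrow> nat) \<Rightarrow> 'a::comm_ring_1"
  assumes gh: "(g, h) \<in> GL n"
    and conj: "\<And>j l. j \<in> idx n m \<Longrightarrow> l \<in> idx n m \<Longrightarrow>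
       A j l = (\<Sum>i\<in>idx n m. \<Sum>k\<in>idx n m. tensor_rho m eps g h i j * A i k * tensor_rho m eps h g l k)"
    and j: "j \<in> idx n m" and l: "l \<in> idx n m"
  shows "(\<Sum>i\<in>idx n m. tensor_rho m eps g h i j * A i l) = (\<Sum>k\<in>idx n m. A j k * tensor_rho m eps g h l k)"
proof -
  let ?I = "idx n m" and ?\<rho> = "tensor_rho m eps g h" and ?\<rho>' = "tensor_rho m eps h g"
  define F where "F k i p = ?\<rho> i j * (A i p * (?\<rho>' k p * ?\<rho> l k))" for k i p
  have "(\<Sum>k\<in>?I. A j k * ?\<rho> l k) = (\<Sum>k\<in>?I. (\<Sum>i\<in>?I. \<Sum>p\<in>?I. ?\<rho> i j * A i p * ?\<rho>' k p) * ?\<rho> l k)"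
    using conj j by (intro sum.cong refl) auto
  also have "\<dots> = (\<Sum>k\<in>?I. \<Sum>i\<in>?I. \<Sum>p\<in>?I. F k i p)"
    by (simp add: F_def sum_distrib_right mult.assoc)
  also have "\<dots> = (\<Sum>i\<in>?I. \<Sum>p\<in>?I. \<Sum>k\<in>?I. F k i p)"
    by (subst sum.swap) (intro sum.cong refl sum.swap)
  also have "\<dots> = (\<Sum>i\<in>?I. \<Sum>p\<in>?I. ?\<rho> i j * A i p * (\<Sum>k\<in>?I. ?\<rho>' k p * ?\<rho> l k))"
    by (simp add: F_def sum_distrib_left mult.assoc)
  also have "\<dots> = (\<Sum>i\<in>?I. \<Sum>p\<in>?I. ?\<rho> i j * A i p * (if p = l then 1 else 0))"
    using tensor_rho_inverse[OF GL_swap[OF gh] _ l] by (intro sum.cong refl) auto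
  also have "\<dots> = (\<Sum>i\<in>?I. ?\<rho> i j * A i l)"
    using l by (simp add: if_distrib cong: if_cong)
  finally show ?thesis by simp
qed

text \<open>Unlike commutation, the conjugation form is a double sum over row and column indices,
  which partial transposition merely reindexes.\<close>

lemma End_G_conj:
  "End_G n m eps = {A. (\<forall>i j. \<not> (i \<in> idx n m \<and> j \<in> idx n m) \<longrightarrow> A i j = 0) \<and>
     (\<forall>(g, h) \<in> GL n. \<forall>j\<in>idx n m. \<forall>l\<in>idx n m.
       A j l = (\<Sum>i\<in>idx n m. \<Sum>k\<in>idx n m. tensor_rho m eps g h i j * A i k * tensor_rho m eps h g l k))}"
  unfolding End_G_def
  by (intro Collect_cong conj_cong refl) (blast intro: commute_imp_conj conj_imp_commute)

lemma partial_transpose_End_G: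
  assumes A: "A \<in> End_G n m eps"
  shows "partial_transpose L A \<in> End_G n m (\<lambda>t. eps t \<noteq> L t)"
proof -
  let ?I = "idx n m" and ?e = "\<lambda>t. eps t \<noteq> L t" and ?A = "partial_transpose L A"
  let ?s = "idx_splice L"
  have supp: "\<And>i j. \<not> (i \<in> ?I \<and> j \<in> ?I) \<Longrightarrow> A i j = 0"
   and conj: "\<And>g h j l. (g, h) \<in> GL n \<Longrightarrow> j \<in> ?I \<Longrightarrow> l \<in> ?I \<Longrightarrow>
       A j l = (\<Sum>i\<in>?I. \<Sum>k\<in>?I. tensor_rho m eps g h i j * A i k * tensor_rho m eps h g l k)"
    using A unfolding End_G_conj by blast+
  have "?A i j = 0" if "\<not> (i \<in> ?I \<and> j \<in> ?I)" for i j
    using that supp[of "?s i j" "?s j i"] idx_splice_in_idx_iff[of L i j n m]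
    by (simp add: partial_transpose_def)
  moreover have "?A j l = (\<Sum>i\<in>?I. \<Sum>k\<in>?I. tensor_rho m ?e g h i j * ?A i k * tensor_rho m ?e h g l k)"
    if gh: "(g, h) \<in> GL n" and j: "j \<in> ?I" and l: "l \<in> ?I" for g h j l
  proof -
    have "?A j l = (\<Sum>i\<in>?I. \<Sum>k\<in>?I. tensor_rho m eps g h i (?s j l) * A i k * tensor_rho m eps h g (?s l j) k)"
      unfolding partial_transpose_def by (rule conj[OF gh]) (auto intro: idx_splice_in_idx j l)
    also have "\<dots> = (\<Sum>i\<in>?I. \<Sum>k\<in>?I. tensor_rho m eps g h (?s i k) (?s j l) * A (?s i k) (?s k i) *
                                         tensor_rho m eps h g (?s l j) (?s k i))"
      by (rule sum_idx_splice_reindex)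
    also have "\<dots> = (\<Sum>i\<in>?I. \<Sum>k\<in>?I. tensor_rho m ?e g h i j * ?A i k * tensor_rho m ?e h g l k)"
    proof (intro sum.cong refl)
      fix i k
      have "tensor_rho m eps g h (?s i k) (?s j l) * A (?s i k) (?s k i) * tensor_rho m eps h g (?s l j) (?s k i)
          = (tensor_rho m eps g h (?s i k) (?s j l) * tensor_rho m eps h g (?s l j) (?s k i)) * ?A i k"
        by (simp add: partial_transpose_def ac_simps)
      then show "tensor_rho m eps g h (?s i k) (?s j l) * A (?s i k) (?s k i) * tensor_rho m eps h g (?s l j) (?s k i)
          = tensor_rho m ?e g h i j * ?A i k * tensor_rho m ?e h g l k"
        by (simp add: tensor_rho_idx_splice ac_simps)
    qed
    finally show ?thesis .
  qed
  ultimately show ?thesis unfolding End_G_conj by blast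
qed

section \<open>Flipping the last columns of a diagram\<close>

definition flip_vertex :: "nat \<Rightarrow> nat \<Rightarrow> nat \<Rightarrow> nat" where
  "flip_vertex r m x =
     (if x < m \<and> r \<le> x then x + m else if m \<le> x \<and> x < 2*m \<and> r \<le> x - m then x - m else x)"

definition flip_diagram :: "nat \<Rightarrow> nat \<Rightarrow> (nat \<Rightarrow> nat) \<Rightarrow> nat \<Rightarrow> nat" where
  "flip_diagram r m d = (\<lambda>x. if x < 2*m then flip_vertex r m (d (flip_vertex r m x)) else d x)"

lemma flip_vertex_flip_vertex [simp]: "flip_vertex r m (flip_vertex r m x) = x"
  by (auto simp: flip_vertex_def)

lemma flip_vertex_less_iff [simp]: "flip_vertex r m x < 2*m \<longleftrightarrow> x < 2*m"
  by (auto simp: flip_vertex_def)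

lemma top_row_flip_vertex:
  "x < 2*m \<Longrightarrow> top_row m (flip_vertex r m x) \<longleftrightarrow> (top_row m x \<longleftrightarrow> in_F r m x)"
  by (auto simp: flip_vertex_def top_row_def in_F_def col_def)

lemma flip_diagram_flip_diagram [simp]: "flip_diagram r m (flip_diagram r m d) = d"
  by (auto simp: flip_diagram_def)

lemma brauer_diagramsD:
  assumes "d \<in> brauer_diagrams m"
  shows "x < 2*m \<Longrightarrow> d x < 2*m" and "x < 2*m \<Longrightarrow> d (d x) = x" and "x < 2*m \<Longrightarrow> d x \<noteq> x"
    and "\<not> x < 2*m \<Longrightarrow> d x = undefined"
  using assms by (auto simp: brauer_diagrams_def PiE_iff extensional_def)

lemma flip_diagram_brauer:
  assumes d: "d \<in> brauer_diagrams m"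
  shows "flip_diagram r m d \<in> brauer_diagrams m"
proof -
  note D = brauer_diagramsD[OF d]
  have "flip_diagram r m d (flip_diagram r m d x) = x \<and> flip_diagram r m d x \<noteq> x"
    if "x < 2*m" for x
    using that D(1-3)[of "flip_vertex r m x"] by (auto simp: flip_diagram_def) (metis flip_vertex_flip_vertex)
  then show ?thesis
    by (auto simp: brauer_diagrams_def PiE_iff extensional_def flip_diagram_def D(1,4))
qed

lemma flip_diagram_at_flip_vertex:
  "y < 2*m \<Longrightarrow> flip_diagram r m d (flip_vertex r m y) = flip_vertex r m (d y)"
  by (simp add: flip_diagram_def)

text \<open>A non-propagating edge of a walled diagram crosses the wall, so flipping exactly the columns
  beyond the wall makes every edge propagating, and conversely.\<close>

lemma walled_iff_flip_perm:
  assumes d: "d \<in> brauer_diagrams (r+s)"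
  shows "flip_diagram r (r+s) d \<in> perm_diagrams (r+s) \<longleftrightarrow> d \<in> walled_diagrams r s"
proof -
  let ?m = "r+s" and ?f = "flip_vertex r (r+s)"
  have "propagating ?m (flip_diagram r ?m d) (?f y) \<longleftrightarrow>
        (propagating ?m d y \<longleftrightarrow> in_F r ?m y = in_F r ?m (d y))" if y: "y < 2*?m" for y
    using top_row_flip_vertex[OF y, of r] top_row_flip_vertex[OF brauer_diagramsD(1)[OF d y], of r]
    unfolding propagating_def flip_diagram_at_flip_vertex[OF y] by blast
  then have "(\<forall>x<2*?m. propagating ?m (flip_diagram r ?m d) x) \<longleftrightarrow>
             (\<forall>y<2*?m. propagating ?m d y \<longleftrightarrow> in_F r ?m y = in_F r ?m (d y))"
    by (metis flip_vertex_flip_vertex flip_vertex_less_iff)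
  then show ?thesis
    using d flip_diagram_brauer[OF d] by (auto simp: perm_diagrams_def walled_diagrams_def)
qed

lemma flip_diagram_walled: "d \<in> walled_diagrams r s \<Longrightarrow> flip_diagram r (r+s) d \<in> perm_diagrams (r+s)"
  using walled_iff_flip_perm by (auto simp: walled_diagrams_def)

lemma flip_diagram_perm:
  assumes "d \<in> perm_diagrams (r+s)"
  shows "flip_diagram r (r+s) d \<in> walled_diagrams r s"
proof -
  have "flip_diagram r (r+s) d \<in> brauer_diagrams (r+s)"
    using assms flip_diagram_brauer by (auto simp: perm_diagrams_def)
  then show ?thesis using walled_iff_flip_perm[of "flip_diagram r (r+s) d" r s] assms by simp
qed

lemma lab_flip_vertex:
  "x < 2*(r+s) \<Longrightarrow>
   lab (r+s) i j (flip_vertex r (r+s) x) =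
   lab (r+s) (idx_splice (\<lambda>k. r \<le> k) i j) (idx_splice (\<lambda>k. r \<le> k) j i) x"
  by (auto simp: lab_def flip_vertex_def idx_splice_def)

lemma diag_coeff_flip_diagram:
  assumes d: "d \<in> brauer_diagrams (r+s)"
  shows "diag_coeff (r+s) (flip_diagram r (r+s) d) i j
       = diag_coeff (r+s) d (idx_splice (\<lambda>k. r \<le> k) i j) (idx_splice (\<lambda>k. r \<le> k) j i)"
proof -
  let ?m = "r+s" and ?f = "flip_vertex r (r+s)"
  let ?l = "lab ?m i j" and ?l' = "lab ?m (idx_splice (\<lambda>k. r \<le> k) i j) (idx_splice (\<lambda>k. r \<le> k) j i)"
  have "?l (?f y) = ?l (flip_diagram r ?m d (?f y)) \<longleftrightarrow> ?l' y = ?l' (d y)" if y: "y < 2*?m" for y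
    using y brauer_diagramsD(1)[OF d y] by (simp add: flip_diagram_at_flip_vertex lab_flip_vertex)
  then have "(\<forall>x<2*?m. ?l x = ?l (flip_diagram r ?m d x)) \<longleftrightarrow> (\<forall>y<2*?m. ?l' y = ?l' (d y))"
    by (metis flip_vertex_flip_vertex flip_vertex_less_iff)
  then show ?thesis by (simp add: diag_coeff_def)
qed

section \<open>Conjugacy of the two representations\<close>

lemma comp_flip_diagram_alg_elems:
  shows "b \<in> alg_elems (walled_diagrams r s) \<Longrightarrow> b \<circ> flip_diagram r (r+s) \<in> alg_elems (perm_diagrams (r+s))"
    and "b \<in> alg_elems (perm_diagrams (r+s)) \<Longrightarrow> b \<circ> flip_diagram r (r+s) \<in> alg_elems (walled_diagrams r s)"
  using flip_diagram_walled[of "flip_diagram r (r+s) d" r s for d]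
    flip_diagram_perm[of "flip_diagram r (r+s) d" r s for d]
  by (auto simp: alg_elems_def)

lemma comp_flip_diagram_comp_flip_diagram [simp]: "b \<circ> flip_diagram r m \<circ> flip_diagram r m = b"
  by (simp add: fun_eq_iff)

lemma sigma_sym_comp_flip_diagram:
  "sigma_sym n (r+s) (b \<circ> flip_diagram r (r+s)) = partial_transpose (\<lambda>k. r \<le> k) (sigma_walled n r s b)"
proof (intro ext)
  fix i j
  let ?L = "\<lambda>k. r \<le> k" and ?m = "r+s"
  have "(\<Sum>d\<in>perm_diagrams ?m. (b \<circ> flip_diagram r ?m) d * diag_coeff ?m d i j)
      = (\<Sum>d\<in>walled_diagrams r s. b d * diag_coeff ?m (flip_diagram r ?m d) i j)"
    by (rule sum.reindex_bij_witness[where i = "flip_diagram r ?m" and j = "flip_diagram r ?m"])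
       (auto intro: flip_diagram_perm flip_diagram_walled)
  also have "\<dots> = (\<Sum>d\<in>walled_diagrams r s. b d * diag_coeff ?m d (idx_splice ?L i j) (idx_splice ?L j i))"
    by (intro sum.cong refl) (simp add: diag_coeff_flip_diagram walled_diagrams_def)
  finally show "sigma_sym n ?m (b \<circ> flip_diagram r ?m) i j = partial_transpose ?L (sigma_walled n r s b) i j"
    using idx_splice_in_idx_iff[of ?L i j n ?m]
    by (simp add: sigma_sym_def sigma_walled_def partial_transpose_def rep_map_def)
qed

lemma sigma_walled_comp_flip_diagram:
  "sigma_walled n r s (b \<circ> flip_diagram r (r+s)) = partial_transpose (\<lambda>k. r \<le> k) (sigma_sym n (r+s) b)"
  using sigma_sym_comp_flip_diagram[of n r s "b \<circ> flip_diagram r (r+s)"] by simp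

lemma partial_transpose_End_G_walled:
  "A \<in> End_G n (r+s) (\<lambda>k. k < r) \<Longrightarrow> partial_transpose (\<lambda>k. r \<le> k) A \<in> End_G n (r+s) (\<lambda>_. True)"
  using partial_transpose_End_G[of A n "r+s" "\<lambda>k. k < r" "\<lambda>k. r \<le> k"]
  by (simp add: not_less[symmetric])

lemma partial_transpose_End_G_sym:
  "A \<in> End_G n (r+s) (\<lambda>_. True) \<Longrightarrow> partial_transpose (\<lambda>k. r \<le> k) A \<in> End_G n (r+s) (\<lambda>k. k < r)"
  using partial_transpose_End_G[of A n "r+s" "\<lambda>_. True" "\<lambda>k. r \<le> k"]
  by (simp add: not_le)

lemma sigma_walled_surj_iff_sigma_sym_surj:
  "(\<forall>A::(nat \<Rightarrow> nat) \<Rightarrow> (nat \<Rightarrow> nat) \<Rightarrow> 'a::comm_ring_1 \<in> End_G n (r+s) (\<lambda>k. k < r).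
      \<exists>b \<in> alg_elems (walled_diagrams r s). sigma_walled n r s b = A)
   \<longleftrightarrow> (\<forall>A::(nat \<Rightarrow> nat) \<Rightarrow> (nat \<Rightarrow> nat) \<Rightarrow> 'a \<in> End_G n (r+s) (\<lambda>_. True).
      \<exists>b \<in> alg_elems (perm_diagrams (r+s)). sigma_sym n (r+s) b = A)"
  (is "?walled \<longleftrightarrow> ?sym")
proof
  assume ?walled
  show ?sym
  proof
    fix A :: "(nat \<Rightarrow> nat) \<Rightarrow> (nat \<Rightarrow> nat) \<Rightarrow> 'a"
    assume "A \<in> End_G n (r+s) (\<lambda>_. True)"
    with \<open>?walled\<close> obtain b where "b \<in> alg_elems (walled_diagrams r s)"
      "sigma_walled n r s b = partial_transpose (\<lambda>k. r \<le> k) A"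
      using partial_transpose_End_G_sym by blast
    then show "\<exists>b \<in> alg_elems (perm_diagrams (r+s)). sigma_sym n (r+s) b = A"
      by (metis comp_flip_diagram_alg_elems(1) sigma_sym_comp_flip_diagram partial_transpose_partial_transpose)
  qed
next
  assume ?sym
  show ?walled
  proof
    fix A :: "(nat \<Rightarrow> nat) \<Rightarrow> (nat \<Rightarrow> nat) \<Rightarrow> 'a"
    assume "A \<in> End_G n (r+s) (\<lambda>k. k < r)"
    with \<open>?sym\<close> obtain b where "b \<in> alg_elems (perm_diagrams (r+s))"
      "sigma_sym n (r+s) b = partial_transpose (\<lambda>k. r \<le> k) A"
      using partial_transpose_End_G_walled by blast
    then show "\<exists>b \<in> alg_elems (walled_diagrams r s). sigma_walled n r s b = A"
      by (metis comp_flip_diagram_alg_elems(2) sigma_walled_comp_flip_diagram partial_transpose_partial_transpose)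
  qed
qed

lemma annihilator_perm_eq_image:
  "(annihilator (perm_diagrams (r+s)) (sigma_sym n (r+s)) :: ((nat \<Rightarrow> nat) \<Rightarrow> 'a::comm_ring_1) set) =
   (\<lambda>b. b \<circ> flip_diagram r (r+s)) ` annihilator (walled_diagrams r s) (sigma_walled n r s)"
proof (intro equalityI subsetI)
  fix v :: "(nat \<Rightarrow> nat) \<Rightarrow> 'a"
  assume "v \<in> annihilator (perm_diagrams (r+s)) (sigma_sym n (r+s))"
  then have "v \<circ> flip_diagram r (r+s) \<in> annihilator (walled_diagrams r s) (sigma_walled n r s)"
    by (simp add: annihilator_def comp_flip_diagram_alg_elems sigma_walled_comp_flip_diagram
        partial_transpose_eq_0_iff)
  then show "v \<in> (\<lambda>b. b \<circ> flip_diagram r (r+s)) ` annihilator (walled_diagrams r s) (sigma_walled n r s)"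
    by (rule image_eqI[rotated]) simp
qed (auto simp: annihilator_def comp_flip_diagram_alg_elems sigma_sym_comp_flip_diagram
      partial_transpose_eq_0_iff)

lemma sigma_walled_faithful_iff_sigma_sym_faithful:
  "(\<forall>b::(nat \<Rightarrow> nat) \<Rightarrow> 'a::comm_ring_1 \<in> alg_elems (walled_diagrams r s).
      sigma_walled n r s b = (\<lambda>_ _. 0) \<longrightarrow> b = (\<lambda>_. 0))
   \<longleftrightarrow> (\<forall>b::(nat \<Rightarrow> nat) \<Rightarrow> 'a \<in> alg_elems (perm_diagrams (r+s)).
      sigma_sym n (r+s) b = (\<lambda>_ _. 0) \<longrightarrow> b = (\<lambda>_. 0))"
  (is "?walled \<longleftrightarrow> ?sym")
proof
  assume ?walled
  show ?sym
  proof (intro ballI impI)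
    fix b :: "(nat \<Rightarrow> nat) \<Rightarrow> 'a"
    assume "b \<in> alg_elems (perm_diagrams (r+s))" "sigma_sym n (r+s) b = (\<lambda>_ _. 0)"
    with \<open>?walled\<close> have "b \<circ> flip_diagram r (r+s) = (\<lambda>_. 0)"
      by (simp add: comp_flip_diagram_alg_elems sigma_walled_comp_flip_diagram partial_transpose_eq_0_iff)
    then show "b = (\<lambda>_. 0)" by (metis comp_flip_diagram_comp_flip_diagram comp_apply)
  qed
next
  assume ?sym
  show ?walled
  proof (intro ballI impI)
    fix b :: "(nat \<Rightarrow> nat) \<Rightarrow> 'a"
    assume "b \<in> alg_elems (walled_diagrams r s)" "sigma_walled n r s b = (\<lambda>_ _. 0)"
    with \<open>?sym\<close> have "b \<circ> flip_diagram r (r+s) = (\<lambda>_. 0)"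
      by (simp add: comp_flip_diagram_alg_elems sigma_sym_comp_flip_diagram partial_transpose_eq_0_iff)
    then show "b = (\<lambda>_. 0)" by (metis comp_flip_diagram_comp_flip_diagram comp_apply)
  qed
qed

section \<open>Faithfulness of the symmetric group action\<close>

lemma finite_perm_diagrams [simp]: "finite (perm_diagrams m)"
proof (rule finite_subset)
  show "perm_diagrams m \<subseteq> {0..<2*m} \<rightarrow>\<^sub>E {0..<2*m}"
    by (auto simp: perm_diagrams_def brauer_diagrams_def)
qed (simp add: finite_PiE)

lemma perm_diagramsD:
  assumes "d \<in> perm_diagrams m"
  shows "x < m \<Longrightarrow> m \<le> d x \<and> d x < 2*m" and "m \<le> x \<Longrightarrow> x < 2*m \<Longrightarrow> d x < m"
proof -
  have B: "d \<in> brauer_diagrams m" and P: "x < 2*m \<Longrightarrow> (x < m) \<noteq> (d x < m)"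
    using assms by (auto simp: perm_diagrams_def propagating_def top_row_def)
  show "x < m \<Longrightarrow> m \<le> d x \<and> d x < 2*m" using P brauer_diagramsD(1)[OF B, of x] by auto
  show "m \<le> x \<Longrightarrow> x < 2*m \<Longrightarrow> d x < m" using P by auto
qed

text \<open>For \<open>m \<le> n\<close> the top row can carry distinct labels; reading off the bottom labels of \<open>d\<close>
  gives a matrix coefficient that detects \<open>d\<close> among all permutation diagrams.\<close>

lemma diag_coeff_perm_diagrams_delta:
  assumes mn: "m \<le> n" and d: "d \<in> perm_diagrams m"
  obtains i j where "i \<in> idx n m" "j \<in> idx n m"
    "\<And>d'. d' \<in> perm_diagrams m \<Longrightarrow> diag_coeff m d' i j = (if d' = d then 1 else (0::'a::comm_ring_1))"
proof
  define i where "i = restrict (\<lambda>x. x) {0..<m}"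
  define j where "j = restrict (\<lambda>y. d (y + m)) {0..<m}"
  have dB: "d \<in> brauer_diagrams m" using d by (simp add: perm_diagrams_def)
  show "i \<in> idx n m" using mn by (auto simp: i_def idx_def)
  have "d (y + m) < n" if "y < m" for y using perm_diagramsD(2)[OF d, of "y + m"] that mn by simp
  then show "j \<in> idx n m" by (auto simp: j_def idx_def)
  have lab: "lab m i j x = (if x < m then x else d x)" if "x < 2*m" for x
    using that by (auto simp: lab_def i_def j_def)
  fix d' assume d': "d' \<in> perm_diagrams m"
  have d'B: "d' \<in> brauer_diagrams m" using d' by (simp add: perm_diagrams_def)
  have edge: "lab m i j x = lab m i j (d' x) \<longleftrightarrow> d' x = d x" if x: "x < 2*m" for x
  proof (cases "x < m")
    case True
    then have "x = d (d' x) \<longleftrightarrow> d' x = d x"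
      using brauer_diagramsD(2)[OF dB, of "d' x"] brauer_diagramsD(2)[OF dB, of x]
        brauer_diagramsD(1)[OF d'B x] x by auto
    then show ?thesis using True perm_diagramsD(1)[OF d' True] lab x by simp
  next
    case False
    then show ?thesis using perm_diagramsD(2)[OF d'] brauer_diagramsD(1)[OF d'B x] lab x by auto
  qed
  have "(\<forall>x<2*m. d' x = d x) \<longleftrightarrow> d' = d"
  proof (intro iffI ext)
    fix x assume "\<forall>x<2*m. d' x = d x"
    then show "d' x = d x"
      using brauer_diagramsD(4)[OF dB, of x] brauer_diagramsD(4)[OF d'B, of x] by (cases "x < 2*m") auto
  qed simp
  then show "diag_coeff m d' i j = (if d' = d then 1 else 0)"
    by (simp add: diag_coeff_def edge)
qed

lemma sigma_sym_faithful:
  fixes b :: "(nat \<Rightarrow> nat) \<Rightarrow> 'a::comm_ring_1"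
  assumes mn: "m \<le> n" and b: "b \<in> alg_elems (perm_diagrams m)"
    and zero: "sigma_sym n m b = (\<lambda>_ _. 0)"
  shows "b = (\<lambda>_. 0)"
proof
  fix d
  show "b d = 0"
  proof (cases "d \<in> perm_diagrams m")
    case True
    then obtain i j where ij: "i \<in> idx n m" "j \<in> idx n m"
      and delta: "\<And>d'. d' \<in> perm_diagrams m \<Longrightarrow> diag_coeff m d' i j = (if d' = d then 1 else (0::'a))"
      using diag_coeff_perm_diagrams_delta[OF mn] by blast
    have "0 = sigma_sym n m b i j" using zero by simp
    also have "\<dots> = (\<Sum>d'\<in>perm_diagrams m. b d' * diag_coeff m d' i j)"
      using ij by (simp add: sigma_sym_def rep_map_def)
    also have "\<dots> = (\<Sum>d'\<in>perm_diagrams m. b d' * (if d' = d then 1 else 0))"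
      by (intro sum.cong refl) (simp add: delta)
    also have "\<dots> = b d" using True by (simp add: if_distrib cong: if_cong)
    finally show ?thesis by simp
  qed (use b in \<open>simp add: alg_elems_def\<close>)
qed

definition perm_diagram :: "nat \<Rightarrow> (nat \<Rightarrow> nat) \<Rightarrow> nat \<Rightarrow> nat" where
  "perm_diagram m p = (\<lambda>x. if x < m then p x + m else if x < 2*m then inv p (x - m) else undefined)"

lemma permutes_lessThan_less: "p permutes {..<m} \<Longrightarrow> x < m \<Longrightarrow> p x < m"
  using permutes_in_image by fastforce

lemma perm_diagram_in_perm_diagrams:
  assumes p: "p permutes {..<m}"
  shows "perm_diagram m p \<in> perm_diagrams m"
proof -
  have ip: "inv p permutes {..<m}" by (rule permutes_inv[OF p])
  have pp: "inv p (p x) = x" "p (inv p x) = x" for x using permutes_inverses[OF p] by auto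
  have "perm_diagram m p x < 2*m \<and> perm_diagram m p (perm_diagram m p x) = x \<and>
        perm_diagram m p x \<noteq> x \<and> propagating m (perm_diagram m p) x" if x: "x < 2*m" for x
  proof (cases "x < m")
    case True
    then show ?thesis
      using permutes_lessThan_less[OF p True] by (simp add: perm_diagram_def propagating_def top_row_def pp)
  next
    case False
    then have "inv p (x - m) < m" using permutes_lessThan_less[OF ip, of "x - m"] x by simp
    then show ?thesis using False x by (simp add: perm_diagram_def propagating_def top_row_def pp)
  qed
  then show ?thesis
    by (auto simp: perm_diagrams_def brauer_diagrams_def PiE_iff extensional_def perm_diagram_def)
qed

lemma inj_on_perm_diagram: "inj_on (perm_diagram m) {p. p permutes {..<m}}"
proof (rule inj_onI, rule ext)
  fix p q x
  assume p: "p \<in> {p. p permutes {..<m}}" and q: "q \<in> {p. p permutes {..<m}}"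
    and eq: "perm_diagram m p = perm_diagram m q"
  show "p x = q x"
  proof (cases "x < m")
    case True
    then show ?thesis using fun_cong[OF eq, of x] by (simp add: perm_diagram_def)
  qed (use p q in \<open>simp add: permutes_not_in\<close>)
qed

lemma diag_coeff_perm_diagram:
  assumes p: "p permutes {..<m}"
  shows "diag_coeff m (perm_diagram m p) i j = (if \<forall>x<m. i x = j (p x) then 1 else 0)"
proof -
  have ip: "inv p permutes {..<m}" by (rule permutes_inv[OF p])
  have "(\<forall>x<2*m. lab m i j x = lab m i j (perm_diagram m p x)) \<longleftrightarrow> (\<forall>x<m. i x = j (p x))"
  proof (intro iffI allI impI)
    fix x assume H: "\<forall>x<2*m. lab m i j x = lab m i j (perm_diagram m p x)" and x: "x < m"
    then have "lab m i j x = lab m i j (perm_diagram m p x)" by simp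
    then show "i x = j (p x)"
      using permutes_lessThan_less[OF p x] x by (simp add: lab_def perm_diagram_def)
  next
    fix x assume H: "\<forall>x<m. i x = j (p x)" and x: "x < 2*m"
    show "lab m i j x = lab m i j (perm_diagram m p x)"
    proof (cases "x < m")
      case False
      then have "inv p (x - m) < m" using permutes_lessThan_less[OF ip] x by simp
      then show ?thesis
        using H False x permutes_inverses(1)[OF p] by (auto simp: lab_def perm_diagram_def)
    qed (use H in \<open>simp add: lab_def perm_diagram_def\<close>)
  qed
  then show ?thesis by (simp add: diag_coeff_def)
qed

definition antisymmetrizer :: "nat \<Rightarrow> nat set \<Rightarrow> (nat \<Rightarrow> nat) \<Rightarrow> 'a::comm_ring_1" where
  "antisymmetrizer m S d = (\<Sum>p | p permutes S. if d = perm_diagram m p then of_int (sign p) else 0)"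

lemma finite_permutations_subset_lessThan: "S \<subseteq> {..<m::nat} \<Longrightarrow> finite {p. p permutes S}"
  by (rule finite_permutations) (rule finite_subset, assumption, simp)

lemma antisymmetrizer_in_alg_elems:
  assumes S: "S \<subseteq> {..<m}"
  shows "antisymmetrizer m S \<in> alg_elems (perm_diagrams m)"
proof -
  have "antisymmetrizer m S d = (0::'a::comm_ring_1)" if d: "d \<notin> perm_diagrams m" for d
  proof -
    have "d \<noteq> perm_diagram m p" if "p permutes S" for p
      using d perm_diagram_in_perm_diagrams[OF permutes_subset[OF that S]] by auto
    then show ?thesis unfolding antisymmetrizer_def by (intro sum.neutral) auto
  qed
  then show ?thesis by (simp add: alg_elems_def)
qed

lemma antisymmetrizer_perm_diagram_id:
  assumes S: "S \<subseteq> {..<m}"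
  shows "antisymmetrizer m S (perm_diagram m id) = 1"
proof -
  have "perm_diagram m id = perm_diagram m p \<longleftrightarrow> p = id" if "p permutes S" for p
    using inj_onD[OF inj_on_perm_diagram[of m], of id p] permutes_subset[OF that S] by auto
  then have "antisymmetrizer m S (perm_diagram m id) = (\<Sum>p | p permutes S. if p = id then of_int (sign p) else 0)"
    unfolding antisymmetrizer_def by (intro sum.cong) auto
  also have "\<dots> = 1"
    by (subst sum.delta[OF finite_permutations_subset_lessThan[OF S]]) simp
  finally show ?thesis .
qed

lemma sigma_sym_antisymmetrizer:
  assumes S: "S \<subseteq> {..<m}" and i: "i \<in> idx n m" and j: "j \<in> idx n m"
  shows "sigma_sym n m (antisymmetrizer m S) i j =
         (\<Sum>p | p permutes S \<and> (\<forall>x<m. i x = j (p x)). of_int (sign p))"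
proof -
  let ?P = "{p. p permutes S}"
  have pm: "p permutes {..<m}" if "p \<in> ?P" for p using that permutes_subset[OF _ S] by simp
  have "sigma_sym n m (antisymmetrizer m S) i j
      = (\<Sum>d\<in>perm_diagrams m. antisymmetrizer m S d * diag_coeff m d i j)"
    using i j by (simp add: sigma_sym_def rep_map_def)
  also have "\<dots> = (\<Sum>d\<in>perm_diagrams m. \<Sum>p\<in>?P.
                      if d = perm_diagram m p then of_int (sign p) * diag_coeff m d i j else 0)"
    unfolding antisymmetrizer_def sum_distrib_right by (intro sum.cong refl) simp
  also have "\<dots> = (\<Sum>p\<in>?P. \<Sum>d\<in>perm_diagrams m.
                      if d = perm_diagram m p then of_int (sign p) * diag_coeff m d i j else 0)"
    by (rule sum.swap)
  also have "\<dots> = (\<Sum>p\<in>?P. if \<forall>x<m. i x = j (p x) then of_int (sign p) else 0)"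
  proof (intro sum.cong refl)
    fix p assume p: "p \<in> ?P"
    show "(\<Sum>d\<in>perm_diagrams m. if d = perm_diagram m p then of_int (sign p) * diag_coeff m d i j else 0)
        = (if \<forall>x<m. i x = j (p x) then of_int (sign p) else 0)"
      by (subst sum.delta[OF finite_perm_diagrams])
        (auto simp: perm_diagram_in_perm_diagrams[OF pm[OF p]] diag_coeff_perm_diagram[OF pm[OF p]])
  qed
  also have "\<dots> = (\<Sum>p | p permutes S \<and> (\<forall>x<m. i x = j (p x)). of_int (sign p))"
    by (subst sum.inter_filter[OF finite_permutations_subset_lessThan[OF S], symmetric]) simp
  finally show ?thesis .
qed

text \<open>Composing with the transposition of two positions carrying the same label is a
  sign-reversing, fixed-point-free involution on the permutations that are summed.\<close>

lemma sum_sign_eq_0_if_repeated_label: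
  fixes S :: "nat set"
  assumes S: "S \<subseteq> {..<m}" and ab: "a \<in> S" "b \<in> S" "a \<noteq> b" and iab: "i a = i b"
  shows "(\<Sum>p | p permutes S \<and> (\<forall>x<m. i x = j (p x)). (of_int (sign p) :: 'a::comm_ring_1)) = 0"
proof (rule sum_involution_eq_0)
  let ?t = "Transposition.transpose a b"
  have t: "?t permutes S" using ab(1,2) by (rule permutes_swap_id)
  have fin: "finite S" using S finite_subset by blast
  fix p assume "p \<in> {p. p permutes S \<and> (\<forall>x<m. i x = j (p x))}"
  then have p: "p permutes S" and H: "\<forall>x<m. i x = j (p x)" by auto
  have "sign (p \<circ> ?t) = - sign p"
    using sign_compose[OF permutes_imp_permutation[OF fin p] permutes_imp_permutation[OF fin t]] ab
    by (simp add: sign_swap_id)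
  then show "of_int (sign (p \<circ> ?t)) + (of_int (sign p) :: 'a) = 0" by simp
  have "i x = j (p (?t x))" if "x < m" for x
    using H that ab S iab by (cases "x = a"; cases "x = b") auto
  then show "p \<circ> ?t \<in> {p. p permutes S \<and> (\<forall>x<m. i x = j (p x))}"
    using permutes_compose[OF t p] by auto
  show "p \<circ> ?t \<circ> ?t = p" by (simp add: comp_assoc)
  show "p \<circ> ?t \<noteq> p"
    using permutes_inj[OF p] ab by (metis comp_apply inj_eq transpose_apply_first)
qed

lemma sigma_sym_antisymmetrizer_eq_0:
  assumes nm: "n < m"
  shows "sigma_sym n m (antisymmetrizer m {..n}) = (\<lambda>_ _. 0)"
proof (intro ext)
  fix i j
  show "sigma_sym n m (antisymmetrizer m {..n}) i j = 0"
  proof (cases "i \<in> idx n m \<and> j \<in> idx n m")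
    case True
    have "i ` {..n} \<subseteq> {0..<n}" using True nm by (auto simp: idx_def PiE_iff)
    then have "card (i ` {..n}) \<le> card {0..<n}" by (intro card_mono) simp_all
    then have "card (i ` {..n}) < card {..n}" by simp
    then obtain a b where ab: "a \<in> {..n}" "b \<in> {..n}" "a \<noteq> b" "i a = i b"
      using pigeonhole[of i "{..n}"] unfolding inj_on_def by blast
    have S: "{..n} \<subseteq> {..<m}" using nm by auto
    have "sigma_sym n m (antisymmetrizer m {..n}) i j =
          (\<Sum>p | p permutes {..n} \<and> (\<forall>x<m. i x = j (p x)). of_int (sign p))"
      using True by (intro sigma_sym_antisymmetrizer[OF S]) auto
    also have "\<dots> = 0" by (rule sum_sign_eq_0_if_repeated_label[OF S ab])
    finally show ?thesis .
  qed (auto simp: sigma_sym_def rep_map_def)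
qed

lemma sigma_sym_faithful_iff:
  assumes "(1::'a::comm_ring_1) \<noteq> 0"
  shows "(\<forall>b::(nat \<Rightarrow> nat) \<Rightarrow> 'a \<in> alg_elems (perm_diagrams m). sigma_sym n m b = (\<lambda>_ _. 0) \<longrightarrow> b = (\<lambda>_. 0))
         \<longleftrightarrow> m \<le> n"
proof
  assume faithful: "\<forall>b::(nat \<Rightarrow> nat) \<Rightarrow> 'a \<in> alg_elems (perm_diagrams m). sigma_sym n m b = (\<lambda>_ _. 0) \<longrightarrow> b = (\<lambda>_. 0)"
  show "m \<le> n"
  proof (rule ccontr)
    assume "\<not> m \<le> n"
    then have S: "{..n} \<subseteq> {..<m}" and "sigma_sym n m (antisymmetrizer m {..n}) = (\<lambda>_ _. (0::'a))"
      by (auto intro: sigma_sym_antisymmetrizer_eq_0)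
    then have "antisymmetrizer m {..n} = (\<lambda>_. (0::'a))"
      using faithful antisymmetrizer_in_alg_elems[OF S] by blast
    then show False
      using antisymmetrizer_perm_diagram_id[OF S] assms by (metis (mono_tags))
  qed
qed (use sigma_sym_faithful in blast)

lemma free_of_rank_image_comp:
  assumes "surj \<phi>" and "free_of_rank K k"
  shows "free_of_rank ((\<lambda>b. b \<circ> \<phi>) ` K) k"
proof -
  obtain f where span: "\<forall>t<k. f t \<in> K"
    and indep: "\<forall>c. (\<lambda>x. \<Sum>t<k. c t * f t x) = (\<lambda>_. 0) \<longrightarrow> (\<forall>t<k. c t = 0)"
    and gen: "\<forall>v\<in>K. \<exists>c. v = (\<lambda>x. \<Sum>t<k. c t * f t x)"
    using assms(2) unfolding free_of_rank_def by blast
  show ?thesis unfolding free_of_rank_def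
  proof (intro exI[of _ "\<lambda>t. f t \<circ> \<phi>"] conjI allI impI ballI)
    show "f t \<circ> \<phi> \<in> (\<lambda>b. b \<circ> \<phi>) ` K" if "t < k" for t using span that by blast
  next
    fix c t assume H: "(\<lambda>x. \<Sum>t<k. c t * (f t \<circ> \<phi>) x) = (\<lambda>_. 0)" and t: "t < k"
    have "(\<Sum>t<k. c t * f t y) = 0" for y
    proof -
      obtain x where "y = \<phi> x" using \<open>surj \<phi>\<close> by blast
      then show ?thesis using fun_cong[OF H, of x] by simp
    qed
    then show "c t = 0" using indep t by auto
  next
    fix v assume "v \<in> (\<lambda>b. b \<circ> \<phi>) ` K"
    then obtain w c where "v = w \<circ> \<phi>" "w = (\<lambda>x. \<Sum>t<k. c t * f t x)" using gen by blast
    then show "\<exists>c. v = (\<lambda>x. \<Sum>t<k. c t * (f t \<circ> \<phi>) x)" by (auto simp: o_def)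
  qed
qed

lemma free_of_rank_image_comp_involution_iff:
  assumes inv: "\<And>x. \<phi> (\<phi> x) = x"
  shows "free_of_rank ((\<lambda>b. b \<circ> \<phi>) ` K) k \<longleftrightarrow> free_of_rank K k"
proof -
  have "surj \<phi>" using inv by (metis surjI)
  moreover have "(\<lambda>b. b \<circ> \<phi>) ` (\<lambda>b. b \<circ> \<phi>) ` K = K"
    by (auto simp: image_image o_def inv)
  ultimately show ?thesis
    using free_of_rank_image_comp[of \<phi> K k] free_of_rank_image_comp[of \<phi> "(\<lambda>b. b \<circ> \<phi>) ` K" k]
    by auto
qed

theorem theorem1p1:
  fixes n r s :: nat
  assumes "n \<ge> 1" and "(1::'a::comm_ring_1) \<noteq> 0"
  shows
    "((\<forall>A \<in> (End_G n (r+s) (\<lambda>k. k < r) :: ((nat \<Rightarrow> nat) \<Rightarrow> (nat \<Rightarrow> nat) \<Rightarrow> 'a) set).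
         \<exists>b \<in> alg_elems (walled_diagrams r s). sigma_walled n r s b = A)
      \<longleftrightarrow>
      (\<forall>A \<in> (End_G n (r+s) (\<lambda>_. True) :: ((nat \<Rightarrow> nat) \<Rightarrow> (nat \<Rightarrow> nat) \<Rightarrow> 'a) set).
         \<exists>b \<in> alg_elems (perm_diagrams (r+s)). sigma_sym n (r+s) b = A))
   \<and>
    ((\<forall>b \<in> (alg_elems (walled_diagrams r s) :: ((nat \<Rightarrow> nat) \<Rightarrow> 'a) set).
         sigma_walled n r s b = (\<lambda>_ _. 0) \<longrightarrow> b = (\<lambda>_. 0))
      \<longleftrightarrow> n \<ge> r + s)
   \<and>
    ((free_module (annihilator (walled_diagrams r s) (sigma_walled n r s) :: ((nat \<Rightarrow> nat) \<Rightarrow> 'a) set)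
      \<longleftrightarrow> free_module (annihilator (perm_diagrams (r+s)) (sigma_sym n (r+s)) :: ((nat \<Rightarrow> nat) \<Rightarrow> 'a) set))
     \<and>
     (\<forall>k. free_of_rank (annihilator (walled_diagrams r s) (sigma_walled n r s) :: ((nat \<Rightarrow> nat) \<Rightarrow> 'a) set) k
      \<longleftrightarrow> free_of_rank (annihilator (perm_diagrams (r+s)) (sigma_sym n (r+s)) :: ((nat \<Rightarrow> nat) \<Rightarrow> 'a) set) k))"
proof -
  have "free_of_rank (annihilator (walled_diagrams r s) (sigma_walled n r s) :: ((nat \<Rightarrow> nat) \<Rightarrow> 'a) set) k
    \<longleftrightarrow> free_of_rank (annihilator (perm_diagrams (r+s)) (sigma_sym n (r+s)) :: ((nat \<Rightarrow> nat) \<Rightarrow> 'a) set) k"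
    for k
    unfolding annihilator_perm_eq_image by (simp add: free_of_rank_image_comp_involution_iff)
  moreover have "(\<forall>b \<in> (alg_elems (walled_diagrams r s) :: ((nat \<Rightarrow> nat) \<Rightarrow> 'a) set).
      sigma_walled n r s b = (\<lambda>_ _. 0) \<longrightarrow> b = (\<lambda>_. 0)) \<longleftrightarrow> n \<ge> r + s"
    using sigma_walled_faithful_iff_sigma_sym_faithful sigma_sym_faithful_iff[OF assms(2)] by blast
  ultimately show ?thesis
    by (simp add: free_module_def sigma_walled_surj_iff_sigma_sym_surj)
qed

end
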